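(* Let $N\ge 1$, let $\varepsilon_0,\dots,\varepsilon_N$ be real constants with $\varepsilon_N=0$, let $u_0,\dots,u_N$ be smooth functions of $x$, and set $J_i=\frac14\varepsilon_i\partial^3+\frac12(u_i\partial+\partial u_i)$ for $i=0,\dots,N$. Assume $J_0$ is invertible. Let $B_0$, $R$, $B_s=R^sB_0$ and $\Omega_s=(R^\dagger)^s\Omega_0$ (with $\Omega_0=B_0^{-1}$) be the $N\times N$ matrix operators described in the context. Then for every $s\in\mathbf{Z}$, \[ B_s\,\Omega_{-s}=I_N , \] where $I_N$ is the $N\times N$ identity.
   Context: Here $\partial=\partial/\partial x$ and $\partial^{-1}$ is a formal inverse of $\partial$ ($\partial\partial^{-1}=\partial^{-1}\partial=1$); all operators are (matrix) pseudo-differential operators in $\partial$ with coefficients depending on $x$. Since $\varepsilon_N=0$, $J_N=u_N^{1/2}\partial u_N^{1/2}$ is invertible with $J_N^{-1}=u_N^{-1/2}\partial^{-1}u_N^{-1/2}$. The formal adjoint $\dagger$ satisfies $\partial^\dagger=-\partial$, multiplication operators are self-adjoint, $(AB)^\dagger=B^\dagger A^\dagger$, and for matrix operators one transposes and takes adjoints entrywise; in particular $J_i^\dagger=-J_i$. The operator $B_0$ is the $N\times N$ matrix with entries $(B_0)_{ij}=-J_{i+j-1}$ if $i+j-1\le N$ and $(B_0)_{ij}=0$ otherwise ($1\le i,j\le N$); it is invertible and $\Omega_0:=B_0^{-1}$. The operator $R$ is the $N\times N$ matrix with $R_{ij}=\delta_{i,j+1}$ for $1\le j\le N-1$ and $R_{iN}=-J_{i-1}J_N^{-1}$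 for $1\le i\le N$. Since $J_0$ is invertible, $R$ is invertible, and $B_s:=R^sB_0$, $\Omega_s:=(R^\dagger)^s\Omega_0$ for all $s\in\mathbf Z$. *)

theory Defs
  imports "HOL-Analysis.Analysis"
begin

definition smooth :: "(real \<Rightarrow> real) \<Rightarrow> bool" where
  "smooth f \<longleftrightarrow> (\<forall>k x. ((deriv ^^ k) f) differentiable (at x))"

text \<open>An algebra of (formal) pseudo-differential operators in D = d/dx with smooth
  coefficients: D is invertible, mop f is the multiplication operator by f
  (a ring homomorphism from functions), Leibniz rule, and the formal adjoint adj
  (real-linear anti-involution with adj D = - D and multiplication operators self-adjoint).\<close>
definition psido_algebra ::
  "'a::real_algebra_1 \<Rightarrow> ((real \<Rightarrow> real) \<Rightarrow> 'a) \<Rightarrow> ('a \<Rightarrow> 'a) \<Rightarrow> bool" where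
  "psido_algebra D mop adj \<longleftrightarrow>
     (\<exists>Di. D * Di = 1 \<and> Di * D = 1) \<and>
     (\<forall>f g. smooth f \<longrightarrow> smooth g \<longrightarrow> mop (\<lambda>x. f x + g x) = mop f + mop g) \<and>
     (\<forall>f g. smooth f \<longrightarrow> smooth g \<longrightarrow> mop (\<lambda>x. f x * g x) = mop f * mop g) \<and>
     (\<forall>c. mop (\<lambda>x. c) = of_real c) \<and>
     (\<forall>f. smooth f \<longrightarrow> D * mop f = mop f * D + mop (deriv f)) \<and>
     (\<forall>a b. adj (a + b) = adj a + adj b) \<and>
     (\<forall>c a. adj (c *\<^sub>R a) = c *\<^sub>R adj a) \<and>
     (\<forall>a b. adj (a * b) = adj b * adj a) \<and>
     (\<forall>a. adj (adj a) = a) \<and>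
     adj 1 = 1 \<and>
     adj D = - D \<and>
     (\<forall>f. smooth f \<longrightarrow> adj (mop f) = mop f)"

definition invertible_el :: "'a::ring_1 \<Rightarrow> bool" where
  "invertible_el a \<longleftrightarrow> (\<exists>b. a * b = 1 \<and> b * a = 1)"

definition rinv :: "'a::ring_1 \<Rightarrow> 'a" where
  "rinv a = (SOME b. a * b = 1 \<and> b * a = 1)"

definition Jop :: "'a::real_algebra_1 \<Rightarrow> ((real \<Rightarrow> real) \<Rightarrow> 'a) \<Rightarrow> (nat \<Rightarrow> real)
    \<Rightarrow> (nat \<Rightarrow> real \<Rightarrow> real) \<Rightarrow> nat \<Rightarrow> 'a" where
  "Jop D mop eps u i = (eps i / 4) *\<^sub>R D ^ 3 + (1/2) *\<^sub>R (mop (u i) * D + D * mop (u i))"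

text \<open>N x N matrices of operators, indices 1..N (entries outside are ignored).\<close>
type_synonym 'a mat = "nat \<Rightarrow> nat \<Rightarrow> 'a"

definition mmul :: "nat \<Rightarrow> 'a::ring_1 mat \<Rightarrow> 'a mat \<Rightarrow> 'a mat" where
  "mmul N A B = (\<lambda>i j. \<Sum>k=1..N. A i k * B k j)"

definition mone :: "'a::ring_1 mat" where
  "mone = (\<lambda>i j. if i = j then 1 else 0)"

definition meq :: "nat \<Rightarrow> 'a mat \<Rightarrow> 'a mat \<Rightarrow> bool" where
  "meq N A B \<longleftrightarrow> (\<forall>i\<in>{1..N}. \<forall>j\<in>{1..N}. A i j = B i j)"

definition minv :: "nat \<Rightarrow> 'a::ring_1 mat \<Rightarrow> 'a mat" where
  "minv N A = (SOME B. meq N (mmul N A B) mone \<and> meq N (mmul N B A) mone)"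

definition mpow_nat :: "nat \<Rightarrow> 'a::ring_1 mat \<Rightarrow> nat \<Rightarrow> 'a mat" where
  "mpow_nat N A n = ((mmul N A) ^^ n) mone"

definition mpow :: "nat \<Rightarrow> 'a::ring_1 mat \<Rightarrow> int \<Rightarrow> 'a mat" where
  "mpow N A s = (if 0 \<le> s then mpow_nat N A (nat s) else mpow_nat N (minv N A) (nat (- s)))"

definition madj :: "('a \<Rightarrow> 'a) \<Rightarrow> 'a mat \<Rightarrow> 'a mat" where
  "madj adj A = (\<lambda>i j. adj (A j i))"

definition B0 :: "nat \<Rightarrow> (nat \<Rightarrow> 'a::ring_1) \<Rightarrow> 'a mat" where
  "B0 N J = (\<lambda>i j. if i + j - 1 \<le> N then - J (i + j - 1) else 0)"

definition Rmat :: "nat \<Rightarrow> (nat \<Rightarrow> 'a::ring_1) \<Rightarrow> 'a mat" where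
  "Rmat N J = (\<lambda>i j. if j = N then - (J (i - 1) * rinv (J N))
                      else if i = j + 1 then 1 else 0)"

definition Bs :: "nat \<Rightarrow> (nat \<Rightarrow> 'a::ring_1) \<Rightarrow> int \<Rightarrow> 'a mat" where
  "Bs N J s = mmul N (mpow N (Rmat N J) s) (B0 N J)"

definition Omegas :: "nat \<Rightarrow> ('a \<Rightarrow> 'a) \<Rightarrow> (nat \<Rightarrow> 'a::ring_1) \<Rightarrow> int \<Rightarrow> 'a mat" where
  "Omegas N adj J s = mmul N (mpow N (madj adj (Rmat N J)) s) (minv N (B0 N J))"

end

theory Submission
  imports Defs
begin

text \<open>Each J i is skew-adjoint, hence so is the Hankel matrix B0. A direct computation shows
  that R B0 is again skew-adjoint, so B0 R\<dagger> = - (R B0)\<dagger> = R B0: B0 intertwines R with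
  R\<dagger>. Therefore R^s B0 = B0 (R\<dagger>)^s for every integer s, and
  B_s \<Omega>_{-s} = B0 (R\<dagger>)^s (R\<dagger>)^{-s} B0^{-1} = I. Negative powers require
  invertibility: B0 is anti-triangular with J N = \<surd>u_N \<partial> \<surd>u_N on its antidiagonal, and
  R has an explicit inverse built from J 0^{-1}.\<close>

section \<open>Smooth functions\<close>

lemma smooth_coinduct:
  assumes "P f"
    and "\<And>g x. P g \<Longrightarrow> g differentiable (at x)"
    and "\<And>g. P g \<Longrightarrow> P (deriv g)"
  shows "smooth f"
proof -
  have "P g \<Longrightarrow> (deriv ^^ k) g differentiable (at x)" for g k x
    by (induction k arbitrary: g) (simp_all add: assms(2,3) funpow_Suc_right del: funpow.simps)
  then show ?thesis using assms(1) unfolding smooth_def by blast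
qed

lemma smooth_imp_differentiable: "smooth f \<Longrightarrow> f differentiable (at x)"
  unfolding smooth_def by (metis funpow_0)

lemma smooth_deriv: "smooth f \<Longrightarrow> smooth (deriv f)"
  unfolding smooth_def by (metis funpow_Suc_right comp_apply)

lemma smooth_has_real_derivative: "smooth f \<Longrightarrow> (f has_real_derivative deriv f x) (at x)"
  by (simp add: smooth_imp_differentiable DERIV_deriv_iff_real_differentiable)

lemma smooth_const: "smooth (\<lambda>x. c)"
  by (rule smooth_coinduct[where P = "\<lambda>h. \<exists>c. h = (\<lambda>x. c)"]) auto

text \<open>Finite sums of products of smooth functions form a class closed under deriv,
  which is what smooth_coinduct needs to show that products are smooth.\<close>

inductive sum_of_products :: "(real \<Rightarrow> real) \<Rightarrow> bool" where
  product: "smooth f \<Longrightarrow> smooth g \<Longrightarrow> sum_of_products (\<lambda>x. f x * g x)"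
| sum: "sum_of_products h \<Longrightarrow> sum_of_products k \<Longrightarrow> sum_of_products (\<lambda>x. h x + k x)"

lemma sum_of_products_has_real_derivative:
  "sum_of_products h \<Longrightarrow> (h has_real_derivative deriv h x) (at x)"
proof (induction arbitrary: x rule: sum_of_products.induct)
  case (product f g)
  then have "((\<lambda>x. f x * g x) has_real_derivative deriv f x * g x + f x * deriv g x) (at x)"
    by (auto intro!: derivative_eq_intros smooth_has_real_derivative)
  then show ?case using DERIV_imp_deriv by fastforce
next
  case (sum h k)
  then have "((\<lambda>x. h x + k x) has_real_derivative deriv h x + deriv k x) (at x)"
    by (intro DERIV_add)
  then show ?case using DERIV_imp_deriv by fastforce
qed

lemma sum_of_products_deriv: "sum_of_products h \<Longrightarrow> sum_of_products (deriv h)"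
proof (induction rule: sum_of_products.induct)
  case (product f g)
  have "deriv (\<lambda>x. f x * g x) = (\<lambda>x. deriv f x * g x + f x * deriv g x)"
    using product by (intro ext DERIV_imp_deriv) (auto intro!: derivative_eq_intros smooth_has_real_derivative)
  then show ?case
    using product by (auto intro!: sum_of_products.intros smooth_deriv)
next
  case (sum h k)
  have "deriv (\<lambda>x. h x + k x) = (\<lambda>x. deriv h x + deriv k x)"
    using sum.hyps by (intro ext DERIV_imp_deriv DERIV_add sum_of_products_has_real_derivative)
  then show ?case using sum by (auto intro: sum_of_products.intros)
qed

lemma sum_of_products_smooth: "sum_of_products h \<Longrightarrow> smooth h"
  by (rule smooth_coinduct[where P = sum_of_products])
     (auto intro: sum_of_products_deriv
           simp: sum_of_products_has_real_derivative DERIV_deriv_iff_real_differentiable[symmetric])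

lemma smooth_mult: "smooth f \<Longrightarrow> smooth g \<Longrightarrow> smooth (\<lambda>x. f x * g x)"
  by (rule sum_of_products_smooth[OF sum_of_products.product])

lemma smooth_add:
  assumes "smooth f" "smooth g"
  shows "smooth (\<lambda>x. f x + g x)"
  using sum_of_products_smooth[OF sum_of_products.sum[OF
        sum_of_products.product[OF assms(1) smooth_const[of 1]]
        sum_of_products.product[OF assms(2) smooth_const[of 1]]]]
  by simp

lemma smooth_divide_sqrt_power:
  assumes u: "smooth u" and pos: "\<And>x. u x > 0" and g: "smooth g"
  shows "smooth (\<lambda>x. g x / sqrt (u x) ^ k)"
proof -
  have derivative: "((\<lambda>x. f x / sqrt (u x) ^ k) has_real_derivative
      (deriv f x * u x - (real k / 2) * f x * deriv u x) / sqrt (u x) ^ (k + 2)) (at x)"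
    if f: "smooth f" for f k x
  proof -
    have s: "sqrt (u x) > 0" "sqrt (u x) * sqrt (u x) = u x"
      using pos[of x] by (auto simp: less_imp_le)
    have "((\<lambda>x. f x / sqrt (u x) ^ k) has_real_derivative
        (deriv f x * sqrt (u x) ^ k - f x * (real k * sqrt (u x) ^ (k - 1) * (inverse (sqrt (u x)) / 2 * deriv u x)))
          / (sqrt (u x) ^ k * sqrt (u x) ^ k)) (at x)"
      using pos[of x] s(1)
      by (auto intro!: derivative_eq_intros DERIV_real_sqrt smooth_has_real_derivative u f)
    moreover have "(deriv f x * sqrt (u x) ^ k - f x * (real k * sqrt (u x) ^ (k - 1) * (inverse (sqrt (u x)) / 2 * deriv u x)))
          / (sqrt (u x) ^ k * sqrt (u x) ^ k)
        = (deriv f x * u x - (real k / 2) * f x * deriv u x) / sqrt (u x) ^ (k + 2)"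
      using s by (cases k) (simp_all add: field_simps power_add)
    ultimately show ?thesis by simp
  qed
  show ?thesis
  proof (rule smooth_coinduct[where P = "\<lambda>h. \<exists>g k. smooth g \<and> h = (\<lambda>x. g x / sqrt (u x) ^ k)"])
    fix h x
    assume "\<exists>g k. smooth g \<and> h = (\<lambda>x. g x / sqrt (u x) ^ k)"
    then show "h differentiable (at x)" using derivative real_differentiable_def by blast
  next
    fix h
    assume "\<exists>g k. smooth g \<and> h = (\<lambda>x. g x / sqrt (u x) ^ k)"
    then obtain g k where g: "smooth g" and h: "h = (\<lambda>x. g x / sqrt (u x) ^ k)" by blast
    have "deriv h = (\<lambda>x. (deriv g x * u x + (- (real k / 2)) * (g x * deriv u x)) / sqrt (u x) ^ (k + 2))"
      unfolding h using derivative[OF g] DERIV_imp_deriv by (fastforce simp: algebra_simps)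
    moreover have "smooth (\<lambda>x. deriv g x * u x + (- (real k / 2)) * (g x * deriv u x))"
      using g u by (intro smooth_add smooth_mult smooth_deriv smooth_const)
    ultimately show "\<exists>g k. smooth g \<and> deriv h = (\<lambda>x. g x / sqrt (u x) ^ k)" by blast
  qed (use g in blast)
qed

lemma smooth_sqrt:
  assumes "smooth u" "\<And>x. u x > 0"
  shows "smooth (\<lambda>x. sqrt (u x))"
  using smooth_divide_sqrt_power[OF assms assms(1), of 1] assms(2)
  by (simp add: real_div_sqrt less_imp_le)

lemma smooth_inverse_sqrt:
  assumes "smooth u" "\<And>x. u x > 0"
  shows "smooth (\<lambda>x. 1 / sqrt (u x))"
  using smooth_divide_sqrt_power[OF assms smooth_const, of 1 1] by simp

section \<open>Matrices up to equality on the index range\<close>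

locale square_matrices =
  fixes N :: nat
begin

abbreviation mtimes :: "'a::ring_1 mat \<Rightarrow> 'a mat \<Rightarrow> 'a mat" (infixl "\<cdot>" 70)
  where "A \<cdot> B \<equiv> mmul N A B"

abbreviation mequiv :: "'a mat \<Rightarrow> 'a mat \<Rightarrow> bool" (infix "\<doteq>" 50)
  where "A \<doteq> B \<equiv> meq N A B"

abbreviation mpower :: "'a::ring_1 mat \<Rightarrow> nat \<Rightarrow> 'a mat" (infixr "[^]" 75)
  where "A [^] n \<equiv> mpow_nat N A n"

lemma mmul_assoc: "A \<cdot> B \<cdot> C = A \<cdot> (B \<cdot> C)"
proof (intro ext)
  fix i j
  show "(A \<cdot> B \<cdot> C) i j = (A \<cdot> (B \<cdot> C)) i j"
    unfolding mmul_def by (simp add: sum_distrib_left sum_distrib_right mult.assoc) (rule sum.swap)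
qed

lemma meq_sym: "A \<doteq> B \<Longrightarrow> B \<doteq> A"
  by (simp add: meq_def)

lemma meq_trans [trans]: "A \<doteq> B \<Longrightarrow> B \<doteq> C \<Longrightarrow> A \<doteq> C"
  by (simp add: meq_def)

text \<open>Without these, calculations mixing = and \<doteq> go through the generic substitution
  rules, whose higher-order unification does not terminate in practice.\<close>

lemma eq_meq_trans [trans]: "A = B \<Longrightarrow> B \<doteq> C \<Longrightarrow> A \<doteq> C"
  by simp

lemma meq_eq_trans [trans]: "A \<doteq> B \<Longrightarrow> B = C \<Longrightarrow> A \<doteq> C"
  by simp

lemma mmul_cong_left: "A \<doteq> A' \<Longrightarrow> A \<cdot> B \<doteq> A' \<cdot> B"
  unfolding meq_def mmul_def by simp

lemma mmul_cong_right: "B \<doteq> B' \<Longrightarrow> A \<cdot> B \<doteq> A \<cdot> B'"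
  unfolding meq_def mmul_def by (auto intro!: sum.cong)

lemma mmul_mone_left: "mone \<cdot> A \<doteq> A"
  unfolding meq_def mmul_def mone_def by (simp add: if_distrib[of "\<lambda>x. x * _"] cong: if_cong)

lemma mmul_mone_right: "A \<cdot> mone \<doteq> A"
  unfolding meq_def mmul_def mone_def by (simp add: if_distrib[of "\<lambda>x. _ * x"] cong: if_cong)

lemma mpow_nat_0: "A [^] 0 = mone"
  by (simp add: mpow_nat_def)

lemma mpow_nat_Suc: "A [^] Suc n = A \<cdot> A [^] n"
  by (simp add: mpow_nat_def)

lemma mpow_nat_Suc_right: "A [^] Suc n \<doteq> A [^] n \<cdot> A"
proof (induction n)
  case 0
  show ?case
    by (simp add: mpow_nat_Suc mpow_nat_0 meq_trans[OF mmul_mone_right meq_sym[OF mmul_mone_left]])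
next
  case (Suc n)
  have "A [^] Suc (Suc n) \<doteq> A \<cdot> (A [^] n \<cdot> A)"
    unfolding mpow_nat_Suc[of A "Suc n"] by (rule mmul_cong_right[OF Suc])
  then show ?case by (simp add: mpow_nat_Suc mmul_assoc)
qed

definition minvertible :: "'a::ring_1 mat \<Rightarrow> bool"
  where "minvertible A \<longleftrightarrow> (\<exists>B. A \<cdot> B \<doteq> mone \<and> B \<cdot> A \<doteq> mone)"

lemma minvertibleI:
  assumes right: "A \<cdot> L \<doteq> mone" and left: "L' \<cdot> A \<doteq> mone"
  shows "minvertible A"
proof -
  have "L \<doteq> mone \<cdot> L"
    by (rule meq_sym[OF mmul_mone_left])
  also have "\<dots> \<doteq> L' \<cdot> A \<cdot> L"
    by (rule mmul_cong_left[OF meq_sym[OF left]])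
  also have "\<dots> = L' \<cdot> (A \<cdot> L)"
    by (simp add: mmul_assoc)
  also have "\<dots> \<doteq> L' \<cdot> mone"
    by (rule mmul_cong_right[OF right])
  also have "\<dots> \<doteq> L'"
    by (rule mmul_mone_right)
  finally have "L \<cdot> A \<doteq> mone"
    by (rule meq_trans[OF mmul_cong_left left])
  with right show ?thesis
    unfolding minvertible_def by blast
qed

lemma minv_inverse:
  assumes "minvertible A"
  shows "A \<cdot> minv N A \<doteq> mone" and "minv N A \<cdot> A \<doteq> mone"
proof -
  from assms have "A \<cdot> minv N A \<doteq> mone \<and> minv N A \<cdot> A \<doteq> mone"
    unfolding minvertible_def minv_def by (rule someI_ex)
  then show "A \<cdot> minv N A \<doteq> mone" and "minv N A \<cdot> A \<doteq> mone"
    by blast+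
qed

lemma mpow_nat_inverse:
  assumes "X \<cdot> Y \<doteq> mone"
  shows "X [^] n \<cdot> Y [^] n \<doteq> mone"
proof (induction n)
  case 0
  show ?case
    by (simp add: mpow_nat_0 mmul_mone_left)
next
  case (Suc n)
  have "X [^] Suc n \<cdot> Y [^] Suc n \<doteq> X \<cdot> X [^] n \<cdot> (Y [^] n \<cdot> Y)"
    unfolding mpow_nat_Suc[of X] by (intro mmul_cong_right mpow_nat_Suc_right)
  also have "\<dots> = X \<cdot> (X [^] n \<cdot> Y [^] n \<cdot> Y)"
    by (simp add: mmul_assoc)
  also have "\<dots> \<doteq> X \<cdot> (mone \<cdot> Y)"
    by (intro mmul_cong_right mmul_cong_left Suc)
  also have "\<dots> \<doteq> X \<cdot> Y"
    by (intro mmul_cong_right mmul_mone_left)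
  also have "\<dots> \<doteq> mone"
    by (rule assms)
  finally show ?case .
qed

lemma mpow_nat_intertwine:
  assumes "R \<cdot> B \<doteq> B \<cdot> P"
  shows "R [^] n \<cdot> B \<doteq> B \<cdot> P [^] n"
proof (induction n)
  case 0
  show ?case
    by (simp add: mpow_nat_0 meq_trans[OF mmul_mone_left meq_sym[OF mmul_mone_right]])
next
  case (Suc n)
  have "R [^] Suc n \<cdot> B = R \<cdot> (R [^] n \<cdot> B)"
    by (simp add: mpow_nat_Suc mmul_assoc)
  also have "\<dots> \<doteq> R \<cdot> (B \<cdot> P [^] n)"
    by (rule mmul_cong_right[OF Suc])
  also have "\<dots> = R \<cdot> B \<cdot> P [^] n"
    by (simp add: mmul_assoc)
  also have "\<dots> \<doteq> B \<cdot> P \<cdot> P [^] n"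
    by (rule mmul_cong_left[OF assms])
  also have "\<dots> = B \<cdot> P [^] Suc n"
    by (simp add: mpow_nat_Suc mmul_assoc)
  finally show ?case .
qed

lemma intertwine_inverse:
  assumes "R' \<cdot> R \<doteq> mone" "P \<cdot> P' \<doteq> mone" "R \<cdot> B \<doteq> B \<cdot> P"
  shows "R' \<cdot> B \<doteq> B \<cdot> P'"
proof -
  have "R' \<cdot> B \<doteq> R' \<cdot> (B \<cdot> mone)"
    by (rule meq_sym[OF mmul_cong_right[OF mmul_mone_right]])
  also have "\<dots> \<doteq> R' \<cdot> (B \<cdot> (P \<cdot> P'))"
    by (rule mmul_cong_right[OF mmul_cong_right[OF meq_sym[OF assms(2)]]])
  also have "\<dots> = R' \<cdot> (B \<cdot> P \<cdot> P')"
    by (simp add: mmul_assoc)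
  also have "\<dots> \<doteq> R' \<cdot> (R \<cdot> B \<cdot> P')"
    by (rule mmul_cong_right[OF mmul_cong_left[OF meq_sym[OF assms(3)]]])
  also have "\<dots> = R' \<cdot> R \<cdot> (B \<cdot> P')"
    by (simp add: mmul_assoc)
  also have "\<dots> \<doteq> mone \<cdot> (B \<cdot> P')"
    by (rule mmul_cong_left[OF assms(1)])
  also have "\<dots> \<doteq> B \<cdot> P'"
    by (rule mmul_mone_left)
  finally show ?thesis .
qed

lemma mpow_nat_intertwine_inverse:
  assumes "R \<cdot> B \<doteq> B \<cdot> P" "P \<cdot> P' \<doteq> mone" "B \<cdot> B' \<doteq> mone"
  shows "R [^] n \<cdot> B \<cdot> (P' [^] n \<cdot> B') \<doteq> mone"
proof -
  have "R [^] n \<cdot> B \<cdot> (P' [^] n \<cdot> B') \<doteq> B \<cdot> P [^] n \<cdot> (P' [^] n \<cdot> B')"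
    by (rule mmul_cong_left[OF mpow_nat_intertwine[OF assms(1)]])
  also have "\<dots> = B \<cdot> (P [^] n \<cdot> P' [^] n \<cdot> B')"
    by (simp add: mmul_assoc)
  also have "\<dots> \<doteq> B \<cdot> (mone \<cdot> B')"
    by (intro mmul_cong_right mmul_cong_left mpow_nat_inverse assms(2))
  also have "\<dots> \<doteq> B \<cdot> B'"
    by (intro mmul_cong_right mmul_mone_left)
  also have "\<dots> \<doteq> mone"
    by (rule assms(3))
  finally show ?thesis .
qed

lemma mpow_intertwine_inverse:
  assumes "minvertible R" "minvertible P" "minvertible B"
    and intertwine: "R \<cdot> B \<doteq> B \<cdot> P"
  shows "mpow N R s \<cdot> B \<cdot> (mpow N P (- s) \<cdot> minv N B) \<doteq> mone"
proof -
  note R = minv_inverse[OF assms(1)] and P = minv_inverse[OF assms(2)]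
    and B = minv_inverse[OF assms(3)]
  show ?thesis
  proof (cases "0 \<le> s")
    case True
    then have "mpow N R s = R [^] nat s" "mpow N P (- s) = minv N P [^] nat s"
      by (auto simp: mpow_def mpow_nat_0)
    then show ?thesis
      using mpow_nat_intertwine_inverse[OF intertwine P(1) B(1)] by simp
  next
    case False
    then have "mpow N R s = minv N R [^] nat (- s)" "mpow N P (- s) = P [^] nat (- s)"
      by (auto simp: mpow_def)
    moreover have "minv N R \<cdot> B \<doteq> B \<cdot> minv N P"
      by (rule intertwine_inverse[OF R(2) P(1) intertwine])
    ultimately show ?thesis
      using mpow_nat_intertwine_inverse[OF _ P(2) B(1)] by simp
  qed
qed

end

section \<open>Invertibility of B0 and R\<close>

fun right_inverse_series :: "(nat \<Rightarrow> 'a::ring_1) \<Rightarrow> 'a \<Rightarrow> nat \<Rightarrow> 'a" where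
  "right_inverse_series a z 0 = z"
| "right_inverse_series a z (Suc n) =
     - (z * (\<Sum>m=1..Suc n. a m * right_inverse_series a z (Suc n - m)))"

fun left_inverse_series :: "(nat \<Rightarrow> 'a::ring_1) \<Rightarrow> 'a \<Rightarrow> nat \<Rightarrow> 'a" where
  "left_inverse_series a z 0 = z"
| "left_inverse_series a z (Suc n) =
     - ((\<Sum>m=1..Suc n. left_inverse_series a z (Suc n - m) * a m) * z)"

lemma right_inverse_series_convolution:
  assumes "a 0 * z = 1"
  shows "(\<Sum>m=0..n. a m * right_inverse_series a z (n - m)) = (if n = 0 then 1 else 0)"
proof (cases n)
  case 0
  then show ?thesis using assms by simp
next
  case (Suc p)
  have "a 0 * right_inverse_series a z n = - (a 0 * z * (\<Sum>m=1..n. a m * right_inverse_series a z (n - m)))"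
    using Suc by (simp add: mult.assoc)
  then show ?thesis
    using assms Suc by (simp add: sum.atLeast_Suc_atMost)
qed

lemma left_inverse_series_convolution:
  assumes "z * a 0 = 1"
  shows "(\<Sum>m=0..n. left_inverse_series a z (n - m) * a m) = (if n = 0 then 1 else 0)"
proof (cases n)
  case 0
  then show ?thesis using assms by simp
next
  case (Suc p)
  have "left_inverse_series a z n * a 0 = - ((\<Sum>m=1..n. left_inverse_series a z (n - m) * a m) * (z * a 0))"
    using Suc by (simp add: mult.assoc)
  then show ?thesis
    using assms Suc by (simp add: sum.atLeast_Suc_atMost)
qed

lemma antitriangular_product_sum:
  fixes F :: "nat \<Rightarrow> nat \<Rightarrow> 'a::comm_monoid_add"
  assumes i: "i \<in> {1..N}" and j: "j \<in> {1..N}"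
  shows "(\<Sum>k=1..N. if i + k \<le> N + 1 \<and> k + j \<ge> N + 1 then F (N + 1 - i - k) (k + j - (N + 1)) else 0)
       = (if i \<le> j then (\<Sum>m=0..j - i. F m (j - i - m)) else 0)"
proof (cases "i \<le> j")
  case False
  then have "(if i + k \<le> N + 1 \<and> k + j \<ge> N + 1 then F (N + 1 - i - k) (k + j - (N + 1)) else 0) = 0" for k
    by auto
  then show ?thesis using False by simp
next
  case True
  have "(\<Sum>k=1..N. if i + k \<le> N + 1 \<and> k + j \<ge> N + 1 then F (N + 1 - i - k) (k + j - (N + 1)) else 0)
      = (\<Sum>k\<in>{k\<in>{1..N}. i + k \<le> N + 1 \<and> k + j \<ge> N + 1}. F (N + 1 - i - k) (k + j - (N + 1)))"
    by (rule sum.inter_filter[symmetric]) simp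
  also have "{k\<in>{1..N}. i + k \<le> N + 1 \<and> k + j \<ge> N + 1} = {N + 1 - j..N + 1 - i}"
    using i j True by auto
  also have "(\<Sum>k\<in>{N + 1 - j..N + 1 - i}. F (N + 1 - i - k) (k + j - (N + 1))) = (\<Sum>m=0..j - i. F m (j - i - m))"
    by (rule sum.reindex_bij_witness[where i = "\<lambda>m. N + 1 - i - m" and j = "\<lambda>k. N + 1 - i - k"])
       (use i j True in \<open>auto simp: add.commute\<close>)
  finally show ?thesis using True by simp
qed

lemma rinv_inverse: "invertible_el a \<Longrightarrow> a * rinv a = 1 \<and> rinv a * a = 1"
  unfolding invertible_el_def rinv_def by (rule someI_ex)

context square_matrices
begin

text \<open>B0 is an anti-triangular Hankel matrix whose antidiagonal entries equal - J N, so
  its one-sided inverses are Hankel matrices built from the inverse power series of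
  \<Sum>m. - J (N - m) t^m.\<close>
lemma B0_minvertible:
  fixes J :: "nat \<Rightarrow> 'a::ring_1"
  assumes "invertible_el (J N)"
  shows "minvertible (B0 N J)"
proof -
  define K where "K = rinv (J N)"
  define a where "a m = - J (N - m)" for m
  have a0: "a 0 * - K = 1" "- K * a 0 = 1"
    using rinv_inverse[OF assms] by (simp_all add: a_def K_def)
  define X where "X k j = (if k + j \<ge> N + 1 then right_inverse_series a (- K) (k + j - (N + 1)) else 0)" for k j
  define Y where "Y i k = (if i + k \<ge> N + 1 then left_inverse_series a (- K) (i + k - (N + 1)) else 0)" for i k
  have "B0 N J \<cdot> X \<doteq> mone"
    unfolding meq_def
  proof (intro ballI)
    fix i j assume i: "i \<in> {1..N}" and j: "j \<in> {1..N}"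
    have entry: "B0 N J i k * X k j = (if i + k \<le> N + 1 \<and> k + j \<ge> N + 1
          then a (N + 1 - i - k) * right_inverse_series a (- K) (k + j - (N + 1)) else 0)"
      if "k \<in> {1..N}" for k
      using that i by (auto simp: B0_def X_def a_def)
    then have "(B0 N J \<cdot> X) i j = (if i \<le> j then (\<Sum>m=0..j - i. a m * right_inverse_series a (- K) (j - i - m)) else 0)"
      unfolding mmul_def
      using antitriangular_product_sum[OF i j, of "\<lambda>m n. a m * right_inverse_series a (- K) n"]
      by (simp add: entry)
    then show "(B0 N J \<cdot> X) i j = mone i j"
      using right_inverse_series_convolution[of a "- K" "j - i", OF a0(1)] by (auto simp: mone_def)
  qed
  moreover have "Y \<cdot> B0 N J \<doteq> mone"
    unfolding meq_def
  proof (intro ballI)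
    fix i j assume i: "i \<in> {1..N}" and j: "j \<in> {1..N}"
    have entry: "Y i k * B0 N J k j = (if j + k \<le> N + 1 \<and> k + i \<ge> N + 1
          then left_inverse_series a (- K) (k + i - (N + 1)) * a (N + 1 - j - k) else 0)"
      if "k \<in> {1..N}" for k
      using that j by (auto simp: B0_def Y_def a_def add.commute)
    then have "(Y \<cdot> B0 N J) i j = (if j \<le> i then (\<Sum>m=0..i - j. left_inverse_series a (- K) (i - j - m) * a m) else 0)"
      unfolding mmul_def
      using antitriangular_product_sum[OF j i, of "\<lambda>m n. left_inverse_series a (- K) n * a m"]
      by (simp add: entry)
    then show "(Y \<cdot> B0 N J) i j = mone i j"
      using left_inverse_series_convolution[of "- K" a "i - j", OF a0(2)] by (auto simp: mone_def)
  qed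
  ultimately show ?thesis
    by (rule minvertibleI)
qed

lemma Rmat_mmul_entry:
  fixes J :: "nat \<Rightarrow> 'a::ring_1"
  assumes i: "i \<in> {1..N}"
  shows "(Rmat N J \<cdot> X) i j = (if 2 \<le> i then X (i - 1) j else 0) - J (i - 1) * rinv (J N) * X N j"
proof -
  have "Rmat N J i k * X k j
      = (if k = N then - (J (i - 1) * rinv (J N) * X k j) else 0) + (if k = i - 1 then X k j else 0)"
    if "k \<in> {1..N}" for k
    using that i by (auto simp: Rmat_def)
  then have "(Rmat N J \<cdot> X) i j = (\<Sum>k=1..N. (if k = N then - (J (i - 1) * rinv (J N) * X k j) else 0)
      + (if k = i - 1 then X k j else 0))"
    unfolding mmul_def by (rule sum.cong[OF refl])
  also have "\<dots> = (if 2 \<le> i then X (i - 1) j else 0) - J (i - 1) * rinv (J N) * X N j"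
    using i by (auto simp: sum.distrib sum.delta')
  finally show ?thesis .
qed

lemma Rmat_minvertible:
  fixes J :: "nat \<Rightarrow> 'a::ring_1"
  assumes J0: "invertible_el (J 0)" and JN: "invertible_el (J N)"
  shows "minvertible (Rmat N J)"
proof -
  let ?K = "rinv (J N)"
  obtain Z where Z: "J 0 * Z = 1" "Z * J 0 = 1"
    using J0 unfolding invertible_el_def by blast
  have K: "J N * ?K = 1" "?K * J N = 1"
    using rinv_inverse[OF JN] by blast+
  have cancel: "Z * (J 0 * x) = x" "?K * (J N * x) = x" "J N * (?K * x) = x" for x
    by (simp_all add: Z K flip: mult.assoc)
  define S where "S i j = (if j = i + 1 \<and> i < N then 1 else 0) - (if j = 1 then J i * Z else 0)" for i j
  have "Rmat N J \<cdot> S \<doteq> mone"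
    unfolding meq_def
  proof (intro ballI)
    fix i j assume i: "i \<in> {1..N}" and j: "j \<in> {1..N}"
    show "(Rmat N J \<cdot> S) i j = mone i j"
      using i j Z by (auto simp: Rmat_mmul_entry S_def mone_def algebra_simps mult.assoc cancel)
  qed
  moreover have "S \<cdot> Rmat N J \<doteq> mone"
    unfolding meq_def
  proof (intro ballI)
    fix i j assume i: "i \<in> {1..N}" and j: "j \<in> {1..N}"
    have "S i k * Rmat N J k j = (if k = i + 1 then (if i < N then Rmat N J k j else 0) else 0)
        - (if k = 1 then J i * Z * Rmat N J k j else 0)" if "k \<in> {1..N}" for k
      using that by (auto simp: S_def algebra_simps)
    then have "(S \<cdot> Rmat N J) i j = (\<Sum>k=1..N. (if k = i + 1 then (if i < N then Rmat N J k j else 0) else 0)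
        - (if k = 1 then J i * Z * Rmat N J k j else 0))"
      unfolding mmul_def by (rule sum.cong[OF refl])
    also have "\<dots> = (if i < N then Rmat N J (i + 1) j else 0) - J i * Z * Rmat N J 1 j"
      using i by (auto simp: sum_subtractf sum.delta')
    also have "\<dots> = mone i j"
      using i j K by (auto simp: Rmat_def mone_def algebra_simps mult.assoc cancel)
    finally show "(S \<cdot> Rmat N J) i j = mone i j" .
  qed
  ultimately show ?thesis
    by (rule minvertibleI)
qed

end

section \<open>Pseudo-differential operators\<close>

lemma invertible_el_mult:
  assumes "invertible_el a" "invertible_el b"
  shows "invertible_el (a * b)"
proof -
  obtain a' b' where "a * a' = 1" "a' * a = 1" "b * b' = 1" "b' * b = 1"
    using assms unfolding invertible_el_def by blast
  then have "a * b * (b' * a') = 1" "b' * a' * (a * b) = 1"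
    by (simp_all add: mult.assoc flip: mult.assoc[of b b'] mult.assoc[of a' a])
  then show ?thesis
    unfolding invertible_el_def by blast
qed

locale pseudo_differential_algebra =
  fixes D :: "'a::real_algebra_1" and mop :: "(real \<Rightarrow> real) \<Rightarrow> 'a" and adj :: "'a \<Rightarrow> 'a"
  assumes psido_algebra: "psido_algebra D mop adj"
begin

lemma D_invertible: "invertible_el D"
  using psido_algebra unfolding psido_algebra_def invertible_el_def by blast

lemma mop_mult: "smooth f \<Longrightarrow> smooth g \<Longrightarrow> mop (\<lambda>x. f x * g x) = mop f * mop g"
  using psido_algebra unfolding psido_algebra_def by blast

lemma mop_const: "mop (\<lambda>x. c) = of_real c"
  using psido_algebra unfolding psido_algebra_def by blast

lemma D_mop: "smooth f \<Longrightarrow> D * mop f = mop f * D + mop (deriv f)"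
  using psido_algebra unfolding psido_algebra_def by blast

lemma adj_add: "adj (a + b) = adj a + adj b"
  using psido_algebra unfolding psido_algebra_def by blast

lemma adj_scaleR: "adj (c *\<^sub>R a) = c *\<^sub>R adj a"
  using psido_algebra unfolding psido_algebra_def by blast

lemma adj_mult: "adj (a * b) = adj b * adj a"
  using psido_algebra unfolding psido_algebra_def by blast

lemma adj_one: "adj 1 = 1"
  using psido_algebra unfolding psido_algebra_def by blast

lemma adj_D: "adj D = - D"
  using psido_algebra unfolding psido_algebra_def by blast

lemma adj_mop: "smooth f \<Longrightarrow> adj (mop f) = mop f"
  using psido_algebra unfolding psido_algebra_def by blast

lemma adj_zero: "adj 0 = 0"
  using adj_scaleR[of 0 0] by simp

lemma adj_minus: "adj (- a) = - adj a"
  using adj_scaleR[of "-1" a] by simp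

lemma adj_sum: "adj (\<Sum>k\<in>A. f k) = (\<Sum>k\<in>A. adj (f k))"
  by (induction A rule: infinite_finite_induct) (simp_all add: adj_zero adj_add)

lemma Jop_skew_adjoint:
  assumes "smooth (u i)"
  shows "adj (Jop D mop eps u i) = - Jop D mop eps u i"
proof -
  have "adj (D ^ 3) = - (D ^ 3)"
    by (simp add: power3_eq_cube adj_mult adj_D mult.assoc)
  then show ?thesis
    by (simp add: Jop_def adj_add adj_scaleR adj_mult adj_D adj_mop[OF assms] algebra_simps)
qed

lemma mop_D_mop:
  assumes s: "smooth s"
  shows "mop s * D * mop s = (1/2) *\<^sub>R (mop (\<lambda>x. s x * s x) * D + D * mop (\<lambda>x. s x * s x))"
proof -
  let ?v = "\<lambda>x. s x * s x"
  have "deriv ?v = (\<lambda>x. 2 * (s x * deriv s x))"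
    using s by (intro ext DERIV_imp_deriv) (auto intro!: derivative_eq_intros smooth_has_real_derivative)
  then have "mop (deriv ?v) = 2 *\<^sub>R (mop s * mop (deriv s))"
    using s by (simp add: mop_mult mop_const smooth_const smooth_mult smooth_deriv scaleR_conv_of_real)
  then have "D * mop ?v = mop ?v * D + 2 *\<^sub>R (mop s * mop (deriv s))"
    using D_mop[OF smooth_mult[OF s s]] by simp
  moreover have "mop s * D * mop s = mop ?v * D + mop s * mop (deriv s)"
    using s by (simp add: mult.assoc D_mop distrib_left mop_mult)
  moreover have "(1/2) *\<^sub>R x + (1/2) *\<^sub>R x = x" for x :: 'a
    by (simp flip: scaleR_add_left)
  ultimately show ?thesis
    by (simp add: scaleR_add_right)
qed

lemma symmetrized_mop_D_invertible:
  assumes v: "smooth v" and pos: "\<And>x. v x > 0"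
  shows "invertible_el ((1/2) *\<^sub>R (mop v * D + D * mop v))"
proof -
  define s where "s x = sqrt (v x)" for x
  define t where "t x = 1 / sqrt (v x)" for x
  have s: "smooth s" and t: "smooth t"
    unfolding s_def t_def using smooth_sqrt[OF v pos] smooth_inverse_sqrt[OF v pos] by simp_all
  have "sqrt (v x) * sqrt (v x) = v x" "sqrt (v x) \<noteq> 0" for x
    using pos[of x] by auto
  then have "(\<lambda>x. s x * s x) = v" "(\<lambda>x. s x * t x) = (\<lambda>x. 1)" "(\<lambda>x. t x * s x) = (\<lambda>x. 1)"
    unfolding s_def t_def by auto
  then have v_eq: "mop v = mop s * mop s" and "mop s * mop t = 1" "mop t * mop s = 1"
    using mop_mult[OF s s] mop_mult[OF s t] mop_mult[OF t s] mop_const[of 1] by simp_all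
  then have "invertible_el (mop s)"
    unfolding invertible_el_def by blast
  then have "invertible_el (mop s * D * mop s)"
    by (intro invertible_el_mult D_invertible)
  moreover have "mop s * D * mop s = (1/2) *\<^sub>R (mop v * D + D * mop v)"
    using mop_D_mop[OF s] v_eq mop_mult[OF s s] by simp
  ultimately show ?thesis
    by simp
qed

end

locale operator_matrices = square_matrices N + pseudo_differential_algebra D mop adj
  for N :: nat and D :: "'a::real_algebra_1" and mop and adj
begin

lemma madj_mmul: "madj adj (A \<cdot> B) = madj adj B \<cdot> madj adj A"
  unfolding madj_def mmul_def by (simp add: adj_sum adj_mult)

lemma meq_madj: "A \<doteq> B \<Longrightarrow> madj adj A \<doteq> madj adj B"
  unfolding meq_def madj_def by simp

lemma madj_mone: "madj adj mone = mone"
  unfolding madj_def mone_def by (auto intro!: ext simp: adj_one adj_zero)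

lemma minvertible_madj: "minvertible A \<Longrightarrow> minvertible (madj adj A)"
  unfolding minvertible_def by (metis madj_mmul madj_mone meq_madj)

lemma Rmat_B0_intertwine:
  fixes J :: "nat \<Rightarrow> 'a"
  assumes skew: "\<And>i. i \<le> N \<Longrightarrow> adj (J i) = - J i" and JN: "invertible_el (J N)"
  shows "Rmat N J \<cdot> B0 N J \<doteq> B0 N J \<cdot> madj adj (Rmat N J)"
proof -
  define M where "M i j = (if i = 1 \<and> j = 1 then J 0
      else if 2 \<le> i \<and> 2 \<le> j \<and> i + j - 2 \<le> N then - J (i + j - 2) else 0)" for i j
  have "J (i - 1) * rinv (J N) * J N = J (i - 1)" for i
    using rinv_inverse[OF JN] by (simp add: mult.assoc)
  then have RB0: "(Rmat N J \<cdot> B0 N J) i j = M i j" if "i \<in> {1..N}" "j \<in> {1..N}" for i j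
    using that by (cases "j = 1") (auto simp: Rmat_mmul_entry B0_def M_def numeral_2_eq_2)
  have M_skew: "- adj (M j i) = M i j" for i j
    using skew by (auto simp: M_def adj_minus adj_zero add.commute)
  have "adj (B0 N J k i) = - B0 N J i k" for i k
    using skew by (auto simp: B0_def adj_minus adj_zero add.commute)
  then have "(B0 N J \<cdot> madj adj (Rmat N J)) i j = - adj ((Rmat N J \<cdot> B0 N J) j i)" for i j
    unfolding mmul_def madj_def by (simp add: adj_sum adj_mult sum_negf[symmetric])
  then show ?thesis
    unfolding meq_def using RB0 M_skew by simp
qed

end

theorem mainTheorem1:
  fixes D :: "'a::real_algebra_1"
    and mop :: "(real \<Rightarrow> real) \<Rightarrow> 'a"
    and adj :: "'a \<Rightarrow> 'a"
    and N :: nat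
    and eps :: "nat \<Rightarrow> real"
    and u :: "nat \<Rightarrow> real \<Rightarrow> real"
  assumes alg: "psido_algebra D mop adj"
    and N: "N \<ge> 1"
    and epsN: "eps N = 0"
    and smooth: "\<forall>i\<le>N. smooth (u i)"
    and uN_pos: "\<forall>x. u N x > 0"
    and J0_inv: "invertible_el (Jop D mop eps u 0)"
  shows "\<forall>s::int. meq N (mmul N (Bs N (Jop D mop eps u) s)
                                (Omegas N adj (Jop D mop eps u) (- s))) mone"
proof
  fix s :: int
  interpret operator_matrices N D mop adj
    using alg by unfold_locales
  define J where "J = Jop D mop eps u"
  have skew: "adj (J i) = - J i" if "i \<le> N" for i
    unfolding J_def using smooth that by (blast intro: Jop_skew_adjoint)
  have "J N = (1/2) *\<^sub>R (mop (u N) * D + D * mop (u N))"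
    by (simp add: J_def Jop_def epsN)
  then have JN: "invertible_el (J N)"
    using smooth uN_pos by (simp add: symmetrized_mop_D_invertible)
  have R: "minvertible (Rmat N J)"
    using J0_inv JN unfolding J_def by (rule Rmat_minvertible)
  have "mpow N (Rmat N J) s \<cdot> B0 N J \<cdot> (mpow N (madj adj (Rmat N J)) (- s) \<cdot> minv N (B0 N J)) \<doteq> mone"
    using R minvertible_madj[OF R] B0_minvertible[of J, OF JN] Rmat_B0_intertwine[of J, OF skew JN]
    by (rule mpow_intertwine_inverse)
  then show "meq N (mmul N (Bs N (Jop D mop eps u) s) (Omegas N adj (Jop D mop eps u) (- s))) mone"
    unfolding Bs_def Omegas_def J_def .
qed

end
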